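(* For every $(\alpha,\beta,L,M)\in(0,+\infty)^3\times\mathbb{R}$, $$\frac12\Bigl(\frac{9\alpha^2\beta M^2}{2}\Bigr)^{1/3}L-2\cdot6^{2/3}\alpha\le\mu(\alpha,\beta,L,M)\le\mu^*(\alpha,\beta,L,M)\le\frac12\Bigl(\frac{9\alpha^2\beta M^2}{2}\Bigr)^{1/3}L+\frac{3\alpha}{2}.$$
   Context: $S((0,L))$ is the space of step functions with finitely many jumps on $(0,L)$: functions $u=c+\sum_{s\in S_u}J(s)\mathbf{1}_{[s,L)}$ with finite jump set $S_u\subset(0,L)$ and nonzero jumps; $u(0),u(L)$ denote the values near the endpoints. For $u\in S((0,L))$, $\mathcal{G}(\alpha,\beta,f,(0,L),u)=\alpha\,\#(S_u\cap(0,L))+\beta\int_0^L(u(x)-f(x))^2dx$. Then $\mu(\alpha,\beta,L,M)=\min\{\mathcal{G}(\alpha,\beta,Mx,(0,L),u):u\in S((0,L))\}$ and $\mu^*(\alpha,\beta,L,M)=\min\{\mathcal{G}(\alpha,\beta,Mx,(0,L),u):u\in S((0,L)),u(0)=0,u(L)=ML\}$, where $Mx$ denotes the function $x\mapsto Mx$. *)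

theory Defs
  imports "HOL-Analysis.Analysis"
begin

text \<open>A step function on (0,L) with finitely many jumps, given by its value c near 0,
  its finite jump set S in (0,L), and nonzero jumps J:
  u = c + sum over s in S of J(s) times the indicator of [s,L).\<close>

definition step_fun :: "real \<Rightarrow> real set \<Rightarrow> (real \<Rightarrow> real) \<Rightarrow> real \<Rightarrow> real" where
  "step_fun c S J x = c + (\<Sum>s\<in>S. if s \<le> x then J s else 0)"

definition valid_step :: "real \<Rightarrow> real set \<Rightarrow> (real \<Rightarrow> real) \<Rightarrow> bool" where
  "valid_step L S J \<longleftrightarrow> finite S \<and> S \<subseteq> {0<..<L} \<and> (\<forall>s\<in>S. J s \<noteq> 0)"

definition G :: "real \<Rightarrow> real \<Rightarrow> (real \<Rightarrow> real) \<Rightarrow> real \<Rightarrow> real \<Rightarrow> real set \<Rightarrow> (real \<Rightarrow> real) \<Rightarrow> real" where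
  "G \<alpha> \<beta> f L c S J =
     \<alpha> * real (card S) + \<beta> * integral {0..L} (\<lambda>x. (step_fun c S J x - f x)\<^sup>2)"

definition mu :: "real \<Rightarrow> real \<Rightarrow> real \<Rightarrow> real \<Rightarrow> real" where
  "mu \<alpha> \<beta> L M = Inf {G \<alpha> \<beta> (\<lambda>x. M * x) L c S J | c S J. valid_step L S J}"

text \<open>Boundary conditions: u(0) = c (value near 0), u(L) = c + sum of jumps (value near L).\<close>
definition mu_star :: "real \<Rightarrow> real \<Rightarrow> real \<Rightarrow> real \<Rightarrow> real" where
  "mu_star \<alpha> \<beta> L M = Inf {G \<alpha> \<beta> (\<lambda>x. M * x) L c S J | c S J.
      valid_step L S J \<and> c = 0 \<and> c + (\<Sum>s\<in>S. J s) = M * L}"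

end

theory Submission
  imports Defs
begin

(*
  On an interval of length l, the best constant approximation of M x in L^2 is its midpoint
  value, with error M^2 l^3/12. Cutting (0,L) at the n jumps of u and using the convexity of
  l \<mapsto> l^3 gives G \<ge> \<alpha> n + A/(n+1)^2 with A = \<beta> M^2 L^3/12, and by AM-GM
  \<alpha> k + A/k^2 \<ge> 3 (\<alpha>^2 A/4)^(1/3) = q L/2 for every real k > 0, where q is the cube root in the
  statement; hence \<mu> \<ge> q L/2 - \<alpha>. Conversely, the staircase that rounds M x to the nearest
  multiple of M L/m has its jumps at the odd multiples of L/(2m), satisfies both boundary
  conditions and has G = \<alpha> m + A/m^2; taking m = \<lceil>q L/(3\<alpha>)\<rceil> gives \<mu>* \<le> q L/2 + \<alpha>.
  Both constants are sharper than the stated ones.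
*)

lemma has_integral_sq_affine_deviation:
  fixes d M u v :: real
  assumes "u \<le> v"
  shows "((\<lambda>x. (d - M*x)^2) has_integral
           (M^2*(v - u)^3/12 + (v - u)*(d - M*(u + v)/2)^2)) {u..v}"
proof -
  define F where "F x = d^2*x - d*M*x^2 + M^2*x^3/3" for x
  have "(F has_real_derivative (d - M*x)^2) (at x within {u..v})" for x
    unfolding F_def
    by (auto intro!: derivative_eq_intros simp: power2_eq_square power3_eq_cube algebra_simps)
  then have "((\<lambda>x. (d - M*x)^2) has_integral (F v - F u)) {u..v}"
    by (intro fundamental_theorem_of_calculus[OF assms])
       (simp add: has_real_derivative_iff_has_vector_derivative[symmetric])
  moreover have "F v - F u = M^2*(v - u)^3/12 + (v - u)*(d - M*(u + v)/2)^2"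
    unfolding F_def by (simp add: field_simps power2_eq_square power3_eq_cube)
  ultimately show ?thesis by simp
qed

lemma cube_sum_div_sq_le:
  fixes x y N :: real
  assumes "0 \<le> x" "0 \<le> y" "0 < N"
  shows "(x + y)^3/(N + 1)^2 \<le> x^3/N^2 + y^3"
proof -
  have "(N + 1)^2*x^3 + N^2*(N + 1)^2*y^3 - N^2*(x + y)^3 = (x - N*y)^2*((2*N + 1)*x + N*(N + 2)*y)"
    by (simp add: algebra_simps power2_eq_square power3_eq_cube)
  also have "\<dots> \<ge> 0"
    using assms by simp
  finally have "N^2*(x + y)^3 \<le> (N + 1)^2*x^3 + N^2*(N + 1)^2*y^3"
    by simp
  with assms show ?thesis
    by (simp add: field_simps)
qed

lemma linear_plus_inverse_sq_ge:
  fixes a A k t :: real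
  assumes "0 < a" "0 < k" "0 \<le> t" "4*t^3 = a^2*A"
  shows "3*t \<le> a*k + A/k^2"
proof -
  have "a^2*k^2*(a*k + A/k^2 - 3*t) = (a*k)^3 - 3*t*(a*k)^2 + 4*t^3"
    using assms by (simp add: field_simps power2_eq_square power3_eq_cube)
  also have "\<dots> = (a*k - 2*t)^2*(a*k + t)"
    by (simp add: algebra_simps power2_eq_square power3_eq_cube)
  also have "\<dots> \<ge> 0"
    using assms by simp
  finally have "0 \<le> a^2*k^2*(a*k + A/k^2 - 3*t)" .
  moreover have "0 < a^2*k^2"
    using assms by simp
  ultimately show ?thesis
    by (simp add: zero_le_mult_iff)
qed

lemma linear_plus_inverse_sq_le:
  fixes a A k t :: real
  assumes "0 < a" "0 < t" "4*t^3 = a^2*A" "2*t/a \<le> k" "k < 2*t/a + 1"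
  shows "a*k + A/k^2 \<le> 3*t + a"
proof -
  have "0 \<le> a^2*A"
    using assms by (simp flip: assms(3))
  then have "0 \<le> A"
    using assms by (simp add: zero_le_mult_iff)
  moreover have "0 < 2*t/a"
    using assms by simp
  moreover from this have "0 < k"
    using assms(4) by linarith
  ultimately have "A/k^2 \<le> A/(2*t/a)^2"
    using assms by (intro divide_left_mono power_mono mult_pos_pos zero_less_power) auto
  also have "\<dots> = t"
    using assms by (simp add: field_simps power2_eq_square power3_eq_cube)
  finally have "A/k^2 \<le> t" .
  moreover have "a*k < 2*t + a"
    using assms by (simp add: field_simps)
  ultimately show ?thesis
    by simp
qed

lemma step_fun_insert:
  assumes "finite S" "b \<notin> S"
  shows "step_fun c (insert b S) J x = step_fun c S J x + (if b \<le> x then J b else 0)"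
  using assms by (simp add: step_fun_def)

lemma step_fun_right_of_jumps:
  assumes "\<forall>s\<in>S. s \<le> x"
  shows "step_fun c S J x = c + sum J S"
  using assms unfolding step_fun_def by (intro arg_cong[where f="(+) c"] sum.cong) auto

lemma step_fun_deviation_integral_ge:
  fixes c M l r :: real
  assumes "finite S" "S \<subseteq> {l<..<r}" "l \<le> r"
  shows "(\<lambda>x. (step_fun c S J x - M*x)^2) integrable_on {l..r} \<and>
         M^2*(r - l)^3/(12*(real (card S) + 1)^2)
           \<le> integral {l..r} (\<lambda>x. (step_fun c S J x - M*x)^2)"
  using assms
proof (induction S arbitrary: r rule: finite_linorder_max_induct)
  case empty
  have "((\<lambda>x. (step_fun c {} J x - M*x)^2) has_integral
           (M^2*(r - l)^3/12 + (r - l)*(c - M*(l + r)/2)^2)) {l..r}"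
    using has_integral_sq_affine_deviation[OF empty.prems(2)] by (simp add: step_fun_def)
  moreover have "0 \<le> (r - l)*(c - M*(l + r)/2)^2"
    using empty.prems by simp
  ultimately show ?case
    by (auto simp: integral_unique has_integral_integrable)
next
  case (insert b S)
  let ?f = "\<lambda>S x. (step_fun c S J x - M*x)^2"
  have "b \<notin> S" "l < b" "b < r" "S \<subseteq> {l<..<b}"
    using insert by auto
  then have IH: "?f S integrable_on {l..b}"
      "M^2*(b - l)^3/(12*(real (card S) + 1)^2) \<le> integral {l..b} (?f S)"
    using insert.IH by auto
  have left: "(?f (insert b S) has_integral integral {l..b} (?f S)) {l..b}"
  proof (rule has_integral_spike_finite[of "{b}"])
    show "(?f S has_integral integral {l..b} (?f S)) {l..b}"
      using IH(1) by (rule integrable_integral)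
  qed (use \<open>b \<notin> S\<close> insert.hyps in \<open>auto simp: step_fun_insert\<close>)
  define d where "d = c + sum J (insert b S)"
  have "\<forall>s\<in>insert b S. s \<le> x" if "b \<le> x" for x
    using that insert.hyps by force
  then have right_eq: "?f (insert b S) x = (d - M*x)^2" if "b \<le> x" for x
    using that by (simp add: d_def step_fun_right_of_jumps)
  have right: "(?f (insert b S) has_integral
                 (M^2*(r - b)^3/12 + (r - b)*(d - M*(b + r)/2)^2)) {b..r}"
  proof (rule has_integral_eq[OF _ has_integral_sq_affine_deviation])
    show "(d - M*x)^2 = ?f (insert b S) x" if "x \<in> {b..r}" for x
      using that right_eq by simp
  qed (use \<open>b < r\<close> in simp)
  have whole: "(?f (insert b S) has_integral
      (integral {l..b} (?f S) + (M^2*(r - b)^3/12 + (r - b)*(d - M*(b + r)/2)^2))) {l..r}"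
    using has_integral_combine[OF _ _ left right] \<open>l < b\<close> \<open>b < r\<close> by simp
  have "M^2*(r - l)^3/(12*(real (card (insert b S)) + 1)^2)
      = M^2/12 * (((b - l) + (r - b))^3/((real (card S) + 1) + 1)^2)"
    using insert.hyps \<open>b \<notin> S\<close> by simp
  also have "\<dots> \<le> M^2/12 * ((b - l)^3/(real (card S) + 1)^2 + (r - b)^3)"
    using \<open>l < b\<close> \<open>b < r\<close> by (intro mult_left_mono cube_sum_div_sq_le) auto
  also have "\<dots> = M^2*(b - l)^3/(12*(real (card S) + 1)^2) + M^2*(r - b)^3/12"
    by (simp add: algebra_simps)
  also have "\<dots> \<le> integral {l..b} (?f S) + (M^2*(r - b)^3/12 + (r - b)*(d - M*(b + r)/2)^2)"
    using IH(2) \<open>b < r\<close> zero_le_power2[of "d - M*(b + r)/2"] by (simp add: add_increasing2)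
  finally show ?case
    using whole by (auto simp: integral_unique has_integral_integrable)
qed

definition midpoint_stair :: "real \<Rightarrow> nat \<Rightarrow> real set" where
  "midpoint_stair h m = (\<lambda>j. (real j - 1/2)*h) ` {1..m}"

lemma finite_midpoint_stair [simp]: "finite (midpoint_stair h m)"
  by (simp add: midpoint_stair_def)

lemma midpoint_stair_Suc:
  "midpoint_stair h (Suc m) = insert ((real m + 1/2)*h) (midpoint_stair h m)"
proof -
  have "{1..Suc m} = insert (Suc m) {1..m}"
    by auto
  then show ?thesis
    by (simp add: midpoint_stair_def algebra_simps)
qed

lemma card_midpoint_stair:
  assumes "0 < h"
  shows "card (midpoint_stair h m) = m"
proof -
  have "inj_on (\<lambda>j. (real j - 1/2)*h) {1..m}"
    using assms by (auto simp: inj_on_def)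
  then show ?thesis
    by (simp add: midpoint_stair_def card_image)
qed

lemma midpoint_stair_subset:
  assumes "0 < h"
  shows "midpoint_stair h m \<subseteq> {0<..<real m*h}"
proof
  fix s
  assume "s \<in> midpoint_stair h m"
  then obtain j where j: "1 \<le> j" "j \<le> m" and s: "s = real j*h - h/2"
    by (auto simp: midpoint_stair_def left_diff_distrib)
  have "h \<le> real j*h" "real j*h \<le> real m*h"
    using j assms by (simp_all add: mult_right_mono)
  then have "0 < s \<and> s < real m*h"
    using s assms by linarith
  then show "s \<in> {0<..<real m*h}"
    by simp
qed

lemma step_fun_midpoint_stair_right:
  assumes "0 < h" "real m*h \<le> x"
  shows "step_fun 0 (midpoint_stair h m) (\<lambda>_. M*h) x = M*(real m*h)"
proof -
  have "\<forall>s\<in>midpoint_stair h m. s \<le> x"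
    using midpoint_stair_subset[OF assms(1), of m] assms(2) by force
  then show ?thesis
    by (simp add: step_fun_right_of_jumps card_midpoint_stair[OF assms(1)])
qed

lemma midpoint_stair_deviation_integral:
  assumes "0 < h"
  shows "((\<lambda>x. (step_fun 0 (midpoint_stair h m) (\<lambda>_. M*h) x - M*x)^2)
           has_integral (real m*M^2*h^3/12)) {0..real m*h}"
proof (induction m)
  case 0
  then show ?case
    by (simp add: midpoint_stair_def step_fun_def has_integral_refl)
next
  case (Suc m)
  let ?u = "step_fun 0 (midpoint_stair h m) (\<lambda>_. M*h)"
  let ?f = "\<lambda>x. (step_fun 0 (midpoint_stair h (Suc m)) (\<lambda>_. M*h) x - M*x)^2"
  define a where "a = real m*h"
  define b where "b = (real m + 1/2)*h"
  define c where "c = real (Suc m)*h"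
  have abc: "0 \<le> a" "a < b" "b < c"
    using assms by (simp_all add: a_def b_def c_def algebra_simps)
  have "b \<notin> midpoint_stair h m"
    using midpoint_stair_subset[OF assms, of m] abc by (auto simp: a_def)
  then have f_eq: "?f x = (?u x + (if b \<le> x then M*h else 0) - M*x)^2" for x
    by (simp add: midpoint_stair_Suc step_fun_insert flip: b_def)
  have u_right: "?u x = M*a" if "a \<le> x" for x
    using step_fun_midpoint_stair_right[OF assms] that by (simp add: a_def)
  have f_left: "?f x = (?u x - M*x)^2" if "x \<le> a" for x
    unfolding f_eq using that abc by simp
  have f_mid: "?f x = (M*a - M*x)^2" if "a \<le> x" "x < b" for x
    unfolding f_eq using that by (simp add: u_right)
  have f_right: "?f x = (M*c - M*x)^2" if "b \<le> x" for x
    unfolding f_eq using that abc by (simp add: u_right c_def a_def algebra_simps)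
  have "(?f has_integral (real m*M^2*h^3/12)) {0..a}"
  proof (rule has_integral_eq[OF _ Suc.IH[folded a_def]])
    show "(?u x - M*x)^2 = ?f x" if "x \<in> {0..a}" for x
      using that f_left by simp
  qed
  moreover have "(?f has_integral (M^2*(b - a)^3/12 + (b - a)*(M*a - M*(a + b)/2)^2)) {a..b}"
  proof (rule has_integral_spike_finite[of "{b}", OF _ _ has_integral_sq_affine_deviation])
    show "?f x = (M*a - M*x)^2" if "x \<in> {a..b} - {b}" for x
      using that f_mid by simp
  qed (use abc in simp_all)
  moreover have "(?f has_integral (M^2*(c - b)^3/12 + (c - b)*(M*c - M*(b + c)/2)^2)) {b..c}"
  proof (rule has_integral_eq[OF _ has_integral_sq_affine_deviation])
    show "(M*c - M*x)^2 = ?f x" if "x \<in> {b..c}" for x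
      using that f_right by simp
  qed (use abc in simp)
  ultimately have "(?f has_integral (real m*M^2*h^3/12
      + (M^2*(b - a)^3/12 + (b - a)*(M*a - M*(a + b)/2)^2)
      + (M^2*(c - b)^3/12 + (c - b)*(M*c - M*(b + c)/2)^2))) {0..c}"
    using abc by (intro has_integral_combine[of 0 b c] has_integral_combine[of 0 a b]) simp_all
  moreover have "real m*M^2*h^3/12
      + (M^2*(b - a)^3/12 + (b - a)*(M*a - M*(a + b)/2)^2)
      + (M^2*(c - b)^3/12 + (c - b)*(M*c - M*(b + c)/2)^2) = real (Suc m)*M^2*h^3/12"
    by (simp add: a_def b_def c_def field_simps power2_eq_square power3_eq_cube)
  ultimately show ?case
    by (simp only: c_def)
qed

lemma G_linear_ge:
  assumes "0 \<le> \<beta>" "0 < L" "valid_step L S J"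
  shows "\<alpha>*real (card S) + \<beta>*M^2*L^3/12/(real (card S) + 1)^2 \<le> G \<alpha> \<beta> (\<lambda>x. M*x) L c S J"
proof -
  have "M^2*L^3/(12*(real (card S) + 1)^2)
          \<le> integral {0..L} (\<lambda>x. (step_fun c S J x - M*x)^2)"
    using step_fun_deviation_integral_ge[of S 0 L c J M] assms by (simp add: valid_step_def)
  then have "\<beta>*(M^2*L^3/(12*(real (card S) + 1)^2))
               \<le> \<beta>*integral {0..L} (\<lambda>x. (step_fun c S J x - M*x)^2)"
    using assms(1) by (rule mult_left_mono)
  then show ?thesis
    by (simp add: G_def)
qed

lemma G_linear_nonneg:
  assumes "0 \<le> \<alpha>" "0 \<le> \<beta>" "0 < L" "valid_step L S J"
  shows "0 \<le> G \<alpha> \<beta> (\<lambda>x. M*x) L c S J"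
proof -
  have "0 \<le> \<alpha>*real (card S) + \<beta>*M^2*L^3/12/(real (card S) + 1)^2"
    using assms by simp
  also have "\<dots> \<le> G \<alpha> \<beta> (\<lambda>x. M*x) L c S J"
    using G_linear_ge[OF assms(2-4)] .
  finally show ?thesis .
qed

lemma G_linear_midpoint_stair:
  assumes "0 < L" "0 < m"
  shows "G \<alpha> \<beta> (\<lambda>x. M*x) L 0 (midpoint_stair (L/m) m) (\<lambda>_. M*(L/m))
           = \<alpha>*real m + \<beta>*M^2*L^3/12/(real m)^2"
proof -
  have "0 < L/m" "real m*(L/m) = L"
    using assms by simp_all
  then have "integral {0..L} (\<lambda>x. (step_fun 0 (midpoint_stair (L/m) m) (\<lambda>_. M*(L/m)) x - M*x)^2)
               = real m*M^2*(L/m)^3/12"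
    using midpoint_stair_deviation_integral[of "L/m" m M] by (simp add: integral_unique)
  then show ?thesis
    using assms by (simp add: G_def card_midpoint_stair power3_eq_cube power2_eq_square)
qed

lemma midpoint_stair_admissible:
  assumes "0 < L" "0 < m" "M \<noteq> 0"
  shows "valid_step L (midpoint_stair (L/m) m) (\<lambda>_. M*(L/m))"
    and "0 + sum (\<lambda>_. M*(L/m)) (midpoint_stair (L/m) m) = M*L"
  using assms midpoint_stair_subset[of "L/m" m]
  by (simp_all add: valid_step_def card_midpoint_stair)

lemma G_linear_bdd_below:
  assumes "0 \<le> \<alpha>" "0 \<le> \<beta>" "0 < L"
  shows "bdd_below {G \<alpha> \<beta> (\<lambda>x. M*x) L c S J | c S J. valid_step L S J}"
proof (rule bdd_belowI)
  fix g
  assume "g \<in> {G \<alpha> \<beta> (\<lambda>x. M*x) L c S J | c S J. valid_step L S J}"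
  then obtain c S J where "g = G \<alpha> \<beta> (\<lambda>x. M*x) L c S J" "valid_step L S J"
    by blast
  then show "0 \<le> g"
    using G_linear_nonneg[OF assms] by simp
qed

lemma boundary_step_fun_exists:
  assumes "0 < L"
  obtains S J where "valid_step L S J" "0 + sum J S = M*L"
proof (cases "M = 0")
  case True
  then show ?thesis
    using that[of "{}" "\<lambda>_. 0"] by (simp add: valid_step_def)
next
  case False
  then have "valid_step L (midpoint_stair L 1) (\<lambda>_. M*L)"
    "0 + sum (\<lambda>_. M*L) (midpoint_stair L 1) = M*L"
    using midpoint_stair_admissible[OF assms, of 1 M] by simp_all
  then show ?thesis
    by (rule that)
qed

lemma mu_le_mu_star:
  assumes "0 < \<alpha>" "0 < \<beta>" "0 < L"
  shows "mu \<alpha> \<beta> L M \<le> mu_star \<alpha> \<beta> L M"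
  unfolding mu_def mu_star_def
proof (rule cInf_superset_mono)
  obtain S J where "valid_step L S J" "0 + sum J S = M*L"
    using boundary_step_fun_exists[OF assms(3)] .
  then show "{G \<alpha> \<beta> (\<lambda>x. M*x) L c S J | c S J.
                valid_step L S J \<and> c = 0 \<and> c + (\<Sum>s\<in>S. J s) = M*L} \<noteq> {}"
    by blast
  show "bdd_below {G \<alpha> \<beta> (\<lambda>x. M*x) L c S J | c S J. valid_step L S J}"
    using G_linear_bdd_below assms by simp
qed blast

lemma mu_ge:
  assumes "0 < \<alpha>" "0 < \<beta>" "0 < L" "0 \<le> t" "48*t^3 = \<alpha>^2*\<beta>*M^2*L^3"
  shows "3*t - \<alpha> \<le> mu \<alpha> \<beta> L M"
  unfolding mu_def
proof (rule cInf_greatest)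
  have "valid_step L {} J" for J
    by (simp add: valid_step_def)
  then show "{G \<alpha> \<beta> (\<lambda>x. M*x) L c S J | c S J. valid_step L S J} \<noteq> {}"
    by blast
next
  fix g
  assume "g \<in> {G \<alpha> \<beta> (\<lambda>x. M*x) L c S J | c S J. valid_step L S J}"
  then obtain c S J where g: "g = G \<alpha> \<beta> (\<lambda>x. M*x) L c S J" and v: "valid_step L S J"
    by blast
  have "3*t \<le> \<alpha>*(real (card S) + 1) + \<beta>*M^2*L^3/12/(real (card S) + 1)^2"
    using assms by (intro linear_plus_inverse_sq_ge) auto
  then show "3*t - \<alpha> \<le> g"
    using G_linear_ge[OF _ assms(3) v, of \<beta> \<alpha> M c] assms(2) by (simp add: g algebra_simps)
qed

lemma mu_star_le:
  assumes "0 < \<alpha>" "0 < \<beta>" "0 < L" "0 \<le> t" "48*t^3 = \<alpha>^2*\<beta>*M^2*L^3"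
  shows "mu_star \<alpha> \<beta> L M \<le> 3*t + \<alpha>"
proof -
  let ?Gs = "{G \<alpha> \<beta> (\<lambda>x. M*x) L c S J | c S J.
               valid_step L S J \<and> c = 0 \<and> c + (\<Sum>s\<in>S. J s) = M*L}"
  have "bdd_below {G \<alpha> \<beta> (\<lambda>x. M*x) L c S J | c S J. valid_step L S J}"
    using G_linear_bdd_below assms by simp
  then have bdd: "bdd_below ?Gs"
    by (rule bdd_below_mono) blast
  obtain g where g: "g \<in> ?Gs" "g \<le> 3*t + \<alpha>"
  proof (cases "M = 0")
    case True
    then have "valid_step L {} (\<lambda>_. 0)" "0 + sum (\<lambda>_. 0) {} = M*L"
      by (simp_all add: valid_step_def)
    then have "G \<alpha> \<beta> (\<lambda>x. M*x) L 0 {} (\<lambda>_. 0) \<in> ?Gs"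
      by blast
    moreover have "G \<alpha> \<beta> (\<lambda>x. M*x) L 0 {} (\<lambda>_. 0) \<le> 3*t + \<alpha>"
      using True assms by (simp add: G_def step_fun_def)
    ultimately show ?thesis
      by (rule that)
  next
    case False
    then have "0 < t"
      using assms by (cases "t = 0") auto
    define m where "m = nat \<lceil>2*t/\<alpha>\<rceil>"
    have m: "2*t/\<alpha> \<le> real m" "real m < 2*t/\<alpha> + 1"
      using \<open>0 < t\<close> assms(1) by (simp_all add: m_def) linarith
    moreover have "0 < 2*t/\<alpha>"
      using \<open>0 < t\<close> assms(1) by simp
    ultimately have "0 < m"
      by linarith
    let ?S = "midpoint_stair (L/m) m" and ?J = "\<lambda>_. M*(L/m)"
    have "G \<alpha> \<beta> (\<lambda>x. M*x) L 0 ?S ?J \<in> ?Gs"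
      using midpoint_stair_admissible[OF assms(3) \<open>0 < m\<close> False] by blast
    moreover have "G \<alpha> \<beta> (\<lambda>x. M*x) L 0 ?S ?J \<le> 3*t + \<alpha>"
      unfolding G_linear_midpoint_stair[OF assms(3) \<open>0 < m\<close>]
      using assms \<open>0 < t\<close> m by (intro linear_plus_inverse_sq_le) auto
    ultimately show ?thesis
      by (rule that)
  qed
  show ?thesis
    unfolding mu_star_def by (rule cInf_lower2[OF g bdd])
qed

theorem proposition4p3:
  fixes \<alpha> \<beta> L M :: real
  assumes "\<alpha> > 0" and "\<beta> > 0" and "L > 0"
  shows "(1/2) * (9 * \<alpha>\<^sup>2 * \<beta> * M\<^sup>2 / 2) powr (1/3) * L - 2 * 6 powr (2/3) * \<alpha> \<le> mu \<alpha> \<beta> L M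
       \<and> mu \<alpha> \<beta> L M \<le> mu_star \<alpha> \<beta> L M
       \<and> mu_star \<alpha> \<beta> L M \<le> (1/2) * (9 * \<alpha>\<^sup>2 * \<beta> * M\<^sup>2 / 2) powr (1/3) * L + 3 * \<alpha> / 2"
proof -
  define q where "q = (9 * \<alpha>\<^sup>2 * \<beta> * M\<^sup>2 / 2) powr (1/3)"
  define t where "t = q*L/6"
  have "q^3 = 9 * \<alpha>\<^sup>2 * \<beta> * M\<^sup>2 / 2"
    using root_powr_inverse[of 3] real_root_pow_pos2[of 3] assms by (simp add: q_def)
  then have cube: "48*t^3 = \<alpha>^2*\<beta>*M^2*L^3"
    by (simp add: t_def power_mult_distrib power_divide)
  have "0 \<le> t"
    using assms by (simp add: t_def q_def)
  have "1 \<le> 6 powr (2/3::real)"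
    by (rule ge_one_powr_ge_zero) auto
  then have "\<alpha> \<le> 2 * 6 powr (2/3) * \<alpha>"
    using assms(1) by simp
  moreover have "3*t = (1/2) * q * L"
    by (simp add: t_def)
  ultimately show ?thesis
    using mu_ge[OF assms \<open>0 \<le> t\<close> cube] mu_le_mu_star[OF assms, of M]
      mu_star_le[OF assms \<open>0 \<le> t\<close> cube]
    unfolding q_def[symmetric] by (intro conjI) linarith+
qed

end
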